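(* Assume (H3): for all $m$ and all $(x,v)\in X^m\times Y^m$, if $I(x)\cap\mathrm{supp}_{\iota_X(n)}(w)\neq\emptyset$ for some $n$, then for all $k=n,\dots,m$, $\mathrm{proj}_{m\to k}(\Phi^{(m)}(x,v))=\Phi^{(k)}(\mathrm{proj}_{m\to k}(x,v))$. Then for all $n\in\mathbb{N}$, the involution $\Phi^{(n)}$ maps $\mathbb{S}^{\mathrm{valid}}_n$ into $\mathbb{S}^{\mathrm{valid}}_n$; i.e. if $(x,v)\in\mathbb{S}^{\mathrm{valid}}_n$ then $\Phi^{(n)}(x,v)\in\mathbb{S}^{\mathrm{valid}}_n$.
   Context: $\mathbb{2}=\{\mathsf{T},\mathsf{F}\}$, $\Omega=\mathbb{R}\cup\mathbb{2}$, trace space $\mathbb{T}=\bigcup_{n\ge0}\Omega^n$; $w:\mathbb{T}\to[0,\infty)$ is a measurable tree representable function (prefix property: if $t\in\mathrm{supp}_n(w)$ then no proper prefix of $t$ is in $\mathrm{supp}(w)$; type property: if $t\in\mathrm{supp}_n(w)$, $k<n$ and $s\in\Omega$ lies in the other of $\mathbb{R},\mathbb{2}$ than $t_{k+1}$, then $t^{1\dots k}++[s]\notin\mathrm{supp}(w)$), where $\mathrm{supp}(w)=\{t\mid w(t)>0\}$ and $\mathrm{supp}_m(w)=\mathrm{supp}(w)\cap\Omega^m$. Entropy space $\mathbb{E}=\mathbb{R}\times\mathbb{2}$. A trace $t$ is an instance of $x\in\mathbb{E}^m$ if $|t|\le m$ and $t_i\in\{r_i,a_i\}$ for $i\le|t|$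 where $x_i=(r_i,a_i)$; $I(x)$ is the set of instances. Fix strictly monotone $\iota_X,\iota_Y:\mathbb{N}\to\mathbb{N}$, $X^n=\mathbb{E}^{\iota_X(n)}$, $Y^n=\mathbb{E}^{\iota_Y(n)}$; every trace in $\mathrm{supp}(w)$ has length $\iota_X(k)$ for some $k$. For $k\le n$, $\mathrm{proj}_{n\to k}(x,v)=(x^{1\dots\iota_X(k)},v^{1\dots\iota_Y(k)})$. For each $n$, $\Phi^{(n)}$ is an involution of $X^n\times Y^n$. The set of valid states is defined by recursion on $n$: an $n$-dimensional state $(x,v)\in X^n\times Y^n$ is valid, written $(x,v)\in\mathbb{S}^{\mathrm{valid}}_n$, if (i) $I(x)\cap\mathrm{supp}(w)\neq\emptyset$; (ii) writing $(y,u)=\Phi^{(n)}(x,v)$, $I(y)\cap\mathrm{supp}(w)\neq\emptyset$; and (iii) $\mathrm{proj}_{n\to k}(x,v)\notin\mathbb{S}^{\mathrm{valid}}_k$ for all $k<n$. *)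

theory Defs
  imports Complex_Main
begin

datatype omega = R real | B bool

type_synonym trace = "omega list"

text \<open>Entropy space E = R x 2; elements of E^m are lists of length m.\<close>
type_synonym entropy = "real \<times> bool"

definition supp :: "(trace \<Rightarrow> real) \<Rightarrow> trace set" where
  "supp w = {t. w t > 0}"

definition supp_n :: "(trace \<Rightarrow> real) \<Rightarrow> nat \<Rightarrow> trace set" where
  "supp_n w m = {t \<in> supp w. length t = m}"

definition is_real :: "omega \<Rightarrow> bool" where
  "is_real s = (\<exists>r. s = R r)"

text \<open>Tree representable (measurability omitted).\<close>
definition tree_representable :: "(trace \<Rightarrow> real) \<Rightarrow> bool" where
  "tree_representable w \<longleftrightarrow>
     (\<forall>t. w t \<ge> 0) \<and>
     (\<forall>t \<in> supp w. \<forall>k < length t. take k t \<notin> supp w) \<and>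
     (\<forall>t \<in> supp w. \<forall>k < length t. \<forall>s. is_real s \<noteq> is_real (t ! k)
         \<longrightarrow> take k t @ [s] \<notin> supp w)"

definition instances :: "entropy list \<Rightarrow> trace set" where
  "instances x = {t. length t \<le> length x \<and>
     (\<forall>i < length t. t ! i \<in> {R (fst (x ! i)), B (snd (x ! i))})}"

definition proj :: "(nat \<Rightarrow> nat) \<Rightarrow> (nat \<Rightarrow> nat) \<Rightarrow> nat \<Rightarrow>
    entropy list \<times> entropy list \<Rightarrow> entropy list \<times> entropy list" where
  "proj \<iota>X \<iota>Y k xv = (take (\<iota>X k) (fst xv), take (\<iota>Y k) (snd xv))"

definition state_space :: "(nat \<Rightarrow> nat) \<Rightarrow> (nat \<Rightarrow> nat) \<Rightarrow> nat \<Rightarrow>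
    (entropy list \<times> entropy list) set" where
  "state_space \<iota>X \<iota>Y n = {(x, v). length x = \<iota>X n \<and> length v = \<iota>Y n}"

definition involution_on :: "'a set \<Rightarrow> ('a \<Rightarrow> 'a) \<Rightarrow> bool" where
  "involution_on S f \<longleftrightarrow> (\<forall>z \<in> S. f z \<in> S \<and> f (f z) = z)"

function valid :: "(trace \<Rightarrow> real) \<Rightarrow> (nat \<Rightarrow> nat) \<Rightarrow> (nat \<Rightarrow> nat) \<Rightarrow>
    (nat \<Rightarrow> entropy list \<times> entropy list \<Rightarrow> entropy list \<times> entropy list) \<Rightarrow>
    nat \<Rightarrow> entropy list \<times> entropy list \<Rightarrow> bool" where
  "valid w \<iota>X \<iota>Y \<Phi> n xv \<longleftrightarrow>
     xv \<in> state_space \<iota>X \<iota>Y n \<and>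
     instances (fst xv) \<inter> supp w \<noteq> {} \<and>
     instances (fst (\<Phi> n xv)) \<inter> supp w \<noteq> {} \<and>
     (\<forall>k \<in> {..<n}. \<not> valid w \<iota>X \<iota>Y \<Phi> k (proj \<iota>X \<iota>Y k xv))"
  by pat_completeness auto
termination
  by (relation "measure (\<lambda>(w, \<iota>X, \<iota>Y, \<Phi>, n, xv). n)") auto

definition valid_states where
  "valid_states w \<iota>X \<iota>Y \<Phi> n = {xv. valid w \<iota>X \<iota>Y \<Phi> n xv}"

end

theory Submission
  imports Defs
begin

text \<open>Conditions (i) and (ii) of validity are exchanged by the involution \<open>\<Phi> n\<close>, so only the
  minimality condition (iii) needs an argument, by strong induction on \<open>n\<close>. If \<open>proj k (\<Phi> n z)\<close>
  were valid for some \<open>k < n\<close>, one of its supported instances has length \<open>\<iota>X j\<close> with \<open>j \<le> k\<close>,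
  so by (H3) \<open>\<Phi> k\<close> commutes with the projection; the induction hypothesis then makes
  \<open>\<Phi> k (proj k (\<Phi> n z)) = proj k z\<close> valid, contradicting the validity of \<open>z\<close>.\<close>

declare valid.simps [simp del]

lemma instances_take_subset: "instances (take a x) \<subseteq> instances x"
  unfolding instances_def by auto

locale proj_commuting_involution =
  fixes w :: "trace \<Rightarrow> real"
    and \<iota>X \<iota>Y :: "nat \<Rightarrow> nat"
    and \<Phi> :: "nat \<Rightarrow> entropy list \<times> entropy list \<Rightarrow> entropy list \<times> entropy list"
  assumes monoX: "strict_mono \<iota>X"
    and lens: "\<forall>t \<in> supp w. \<exists>k. length t = \<iota>X k"
    and invol: "\<forall>n. involution_on (state_space \<iota>X \<iota>Y n) (\<Phi> n)"
    and H3: "\<forall>m. \<forall>xv \<in> state_space \<iota>X \<iota>Y m. \<forall>n.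
               instances (fst xv) \<inter> supp_n w (\<iota>X n) \<noteq> {} \<longrightarrow>
               (\<forall>k \<in> {n..m}. proj \<iota>X \<iota>Y k (\<Phi> m xv) = \<Phi> k (proj \<iota>X \<iota>Y k xv))"
begin

lemma supp_instance_of_take:
  assumes "s \<in> instances (take (\<iota>X k) x)" and "s \<in> supp w"
  obtains j where "j \<le> k" and "s \<in> instances x \<inter> supp_n w (\<iota>X j)"
proof -
  obtain j where j: "length s = \<iota>X j"
    using lens assms(2) by blast
  have "length s \<le> \<iota>X k"
    using assms(1) unfolding instances_def by auto
  then have "j \<le> k"
    using j monoX strict_mono_less_eq by metis
  moreover have "s \<in> instances x \<inter> supp_n w (\<iota>X j)"
    using assms instances_take_subset j unfolding supp_n_def by blast
  ultimately show thesis by (rule that)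
qed

lemma proj_Phi:
  assumes "z \<in> state_space \<iota>X \<iota>Y m" and "k \<le> m"
    and "instances (fst (proj \<iota>X \<iota>Y k z)) \<inter> supp w \<noteq> {}"
  shows "proj \<iota>X \<iota>Y k (\<Phi> m z) = \<Phi> k (proj \<iota>X \<iota>Y k z)"
proof -
  obtain s where "s \<in> instances (take (\<iota>X k) (fst z))" and "s \<in> supp w"
    using assms(3) unfolding proj_def by auto
  then obtain j where "j \<le> k" and "instances (fst z) \<inter> supp_n w (\<iota>X j) \<noteq> {}"
    by (metis supp_instance_of_take empty_iff)
  then show ?thesis
    using H3 assms(1,2) by auto
qed

lemma valid_Phi:
  assumes "valid w \<iota>X \<iota>Y \<Phi> n z"
  shows "valid w \<iota>X \<iota>Y \<Phi> n (\<Phi> n z)"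
  using assms
proof (induction n arbitrary: z rule: less_induct)
  case (less n)
  have z: "z \<in> state_space \<iota>X \<iota>Y n"
    and supp_z: "instances (fst z) \<inter> supp w \<noteq> {}"
    and supp_\<Phi>z: "instances (fst (\<Phi> n z)) \<inter> supp w \<noteq> {}"
    and minimal: "\<forall>k \<in> {..<n}. \<not> valid w \<iota>X \<iota>Y \<Phi> k (proj \<iota>X \<iota>Y k z)"
    using less.prems valid.simps by blast+
  have \<Phi>z: "\<Phi> n z \<in> state_space \<iota>X \<iota>Y n" and \<Phi>\<Phi>z: "\<Phi> n (\<Phi> n z) = z"
    using invol z unfolding involution_on_def by blast+
  have "\<not> valid w \<iota>X \<iota>Y \<Phi> k (proj \<iota>X \<iota>Y k (\<Phi> n z))" if k: "k < n" for k
  proof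
    assume valid_k: "valid w \<iota>X \<iota>Y \<Phi> k (proj \<iota>X \<iota>Y k (\<Phi> n z))"
    then have "instances (fst (proj \<iota>X \<iota>Y k (\<Phi> n z))) \<inter> supp w \<noteq> {}"
      using valid.simps by blast
    then have "proj \<iota>X \<iota>Y k z = \<Phi> k (proj \<iota>X \<iota>Y k (\<Phi> n z))"
      using proj_Phi[OF \<Phi>z] k \<Phi>\<Phi>z by simp
    moreover have "valid w \<iota>X \<iota>Y \<Phi> k (\<Phi> k (proj \<iota>X \<iota>Y k (\<Phi> n z)))"
      using less.IH k valid_k by blast
    ultimately show False
      using minimal k by (metis lessThan_iff)
  qed
  then show ?case
    using \<Phi>z supp_\<Phi>z supp_z \<Phi>\<Phi>z valid.simps[of w \<iota>X \<iota>Y \<Phi> n "\<Phi> n z"] by auto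
qed

end

theorem propositionB6:
  fixes w :: "trace \<Rightarrow> real"
    and \<iota>X \<iota>Y :: "nat \<Rightarrow> nat"
    and \<Phi> :: "nat \<Rightarrow> entropy list \<times> entropy list \<Rightarrow> entropy list \<times> entropy list"
  assumes tree: "tree_representable w"
    and monoX: "strict_mono \<iota>X"
    and monoY: "strict_mono \<iota>Y"
    and lens: "\<forall>t \<in> supp w. \<exists>k. length t = \<iota>X k"
    and invol: "\<forall>n. involution_on (state_space \<iota>X \<iota>Y n) (\<Phi> n)"
    and H3: "\<forall>m. \<forall>xv \<in> state_space \<iota>X \<iota>Y m. \<forall>n.
               instances (fst xv) \<inter> supp_n w (\<iota>X n) \<noteq> {} \<longrightarrow>
               (\<forall>k \<in> {n..m}. proj \<iota>X \<iota>Y k (\<Phi> m xv) = \<Phi> k (proj \<iota>X \<iota>Y k xv))"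
  shows "\<forall>n. \<forall>xv \<in> valid_states w \<iota>X \<iota>Y \<Phi> n. \<Phi> n xv \<in> valid_states w \<iota>X \<iota>Y \<Phi> n"
proof -
  interpret proj_commuting_involution w \<iota>X \<iota>Y \<Phi>
    using monoX lens invol H3 by unfold_locales
  show ?thesis
    unfolding valid_states_def using valid_Phi by blast
qed

end
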